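(* For every finite simple graph $G$, $\vartheta(G)=\alpha_{\mathcal S}(G)$.
   Context: $G$ has vertex set $\{1,\dots,n\}$. A weighted adjacency matrix of $G$ is a real symmetric $n\times n$ matrix $A$ with $A_{ii}=0$ and $A_{ij}=0$ whenever $i\ne j$ are non-adjacent. $\vartheta(G)=\inf_B\lambda_{\max}(B)$ over real symmetric $B$ with $B_{ij}=1$ whenever $i=j$ or $i,j$ non-adjacent (the Lovász theta function). With $\boldsymbol 1$ the all-ones vector and $\mathcal S_n=\{\boldsymbol v\in\mathbb R^n:\langle\boldsymbol 1,\boldsymbol v\rangle=|\boldsymbol v|^2\}$, the spherical independence number is $\alpha_{\mathcal S}(G)=\inf_A\sup\{|\boldsymbol v|^2:\boldsymbol v\in\mathcal S_n,\ \langle\boldsymbol v,A\boldsymbol v\rangle=0\}$, the infimum over all weighted adjacency matrices $A$ of $G$. *)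

theory Defs
  imports "HOL-Analysis.Analysis"
begin

definition simple_graph :: "('n::finite \<Rightarrow> 'n \<Rightarrow> bool) \<Rightarrow> bool" where
  "simple_graph E \<longleftrightarrow> (\<forall>i j. E i j \<longrightarrow> E j i) \<and> (\<forall>i. \<not> E i i)"

definition symmetric_matrix :: "real^'n^'n \<Rightarrow> bool" where
  "symmetric_matrix M \<longleftrightarrow> transpose M = M"

definition weighted_adj :: "('n::finite \<Rightarrow> 'n \<Rightarrow> bool) \<Rightarrow> real^'n^'n \<Rightarrow> bool" where
  "weighted_adj E A \<longleftrightarrow> symmetric_matrix A \<and> (\<forall>i. A$i$i = 0)
      \<and> (\<forall>i j. i \<noteq> j \<and> \<not> E i j \<longrightarrow> A$i$j = 0)"

definition lambda_max :: "real^'n^'n \<Rightarrow> real" where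
  "lambda_max B = Sup {l. \<exists>v. v \<noteq> 0 \<and> B *v v = l *\<^sub>R v}"

definition lovasz_theta :: "('n::finite \<Rightarrow> 'n \<Rightarrow> bool) \<Rightarrow> real" where
  "lovasz_theta E = Inf {lambda_max B | B. symmetric_matrix B \<and>
      (\<forall>i j. (i = j \<or> \<not> E i j) \<longrightarrow> B$i$j = 1)}"

definition ones :: "real^'n" where
  "ones = (\<chi> i. 1)"

definition sphere_S :: "(real^'n) set" where
  "sphere_S = {v. ones \<bullet> v = (norm v)^2}"

definition spherical_alpha :: "('n::finite \<Rightarrow> 'n \<Rightarrow> bool) \<Rightarrow> real" where
  "spherical_alpha E = Inf {Sup {(norm v)^2 | v. v \<in> sphere_S \<and> v \<bullet> (A *v v) = 0} | A. weighted_adj E A}"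

end

theory Submission
  imports Defs
begin

(* With J the all-ones matrix, B is theta-feasible iff A = B - J is a weighted adjacency matrix,
   and then x . B x = (ones . x)^2 + x . A x.  A nonzero isotropic vector of A (x . A x = 0)
   rescales onto sphere_S, where (ones . v)^2 = |v|^4; so the Rayleigh bound
   x . B x <= lambda_max B |x|^2 yields |v|^2 <= lambda_max B, i.e. alpha_S <= theta.
   Conversely, if s exceeds the supremum attached to A, the form s |x|^2 - (ones . x)^2 is
   positive on the nonzero isotropic vectors of A, so by Finsler's lemma it dominates
   t (x . A x) for some real t, which says lambda_max (J + t A) <= s. *)

abbreviation quad_form :: "real^'n^'n \<Rightarrow> real^'n \<Rightarrow> real" where
  "quad_form M x \<equiv> x \<bullet> (M *v x)"

lemma symmetric_matrix_iff: "symmetric_matrix M \<longleftrightarrow> (\<forall>i j. M$i$j = M$j$i)"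
  unfolding symmetric_matrix_def transpose_def vec_eq_iff by auto

lemma inner_symmetric_matrix:
  assumes "symmetric_matrix M"
  shows "x \<bullet> (M *v y) = y \<bullet> (M *v x)"
  by (metis assms dot_lmul_matrix inner_commute symmetric_matrix_def vector_transpose_matrix)

lemma quad_form_scaleR: "quad_form M (c *\<^sub>R x) = c^2 * quad_form M x"
  by (simp add: matrix_vector_mult_scaleR power2_eq_square)

lemma quad_form_combination:
  assumes "symmetric_matrix M"
  shows "quad_form M (a *\<^sub>R x + y) = a^2 * quad_form M x + 2 * a * (y \<bullet> (M *v x)) + quad_form M y"
  using inner_symmetric_matrix[OF assms, of x y]
  by (simp add: power2_eq_square algebra_simps)

lemma linear_coeff_zero_if_nonneg_quadratic:
  fixes a b :: real
  assumes "\<And>t. 0 \<le> a * t + b * t^2"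
  shows "a = 0"
proof (rule ccontr)
  assume "a \<noteq> 0"
  define e where "e = 1 / (\<bar>b\<bar> + 1)"
  have "e > 0" "b * e < 1"
    by (auto simp: e_def field_simps abs_if)
  then have "a^2 * e * (b * e - 1) < 0"
    using \<open>a \<noteq> 0\<close> by (simp add: mult_pos_neg)
  moreover have "a * (- a * e) + b * (- a * e)^2 = a^2 * e * (b * e - 1)"
    by (simp add: power2_eq_square algebra_simps)
  ultimately show False
    using assms[of "- a * e"] by linarith
qed

lemma psd_quad_form_zero_imp_kernel:
  assumes "symmetric_matrix M" "\<And>y. 0 \<le> quad_form M y" "quad_form M x = 0"
  shows "M *v x = 0"
proof -
  let ?w = "M *v x"
  have "0 \<le> 2 * (?w \<bullet> ?w) * t + quad_form M ?w * t^2" for t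
  proof -
    have "x \<bullet> (M *v ?w) = ?w \<bullet> ?w"
      by (rule inner_symmetric_matrix[OF assms(1)])
    then show ?thesis
      using assms(2)[of "t *\<^sub>R ?w + x"] quad_form_combination[OF assms(1), of t ?w x] assms(3)
      by (simp add: power2_eq_square algebra_simps)
  qed
  then have "2 * (?w \<bullet> ?w) = 0"
    by (rule linear_coeff_zero_if_nonneg_quadratic)
  then show ?thesis by simp
qed

lemma quad_form_scaled_identity_diff:
  "quad_form (m *\<^sub>R mat 1 - B) x = m * (norm x)^2 - quad_form B x"
  by (simp add: matrix_vector_mult_diff_rdistrib scaleR_matrix_vector_assoc[symmetric]
      inner_diff_right power2_norm_eq_inner)

lemma symmetric_matrix_scaled_identity_diff:
  "symmetric_matrix B \<Longrightarrow> symmetric_matrix (m *\<^sub>R mat 1 - B)"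
  by (simp add: symmetric_matrix_iff mat_def)

text \<open>Rayleigh: the maximum of the quadratic form on the unit sphere is an eigenvalue,
  because the shifted form is positive semidefinite and vanishes at the maximiser.\<close>
lemma symmetric_matrix_max_eigenvalue:
  fixes B :: "real^'n^'n"
  assumes sym: "symmetric_matrix B"
  obtains m v where "v \<noteq> 0" "B *v v = m *\<^sub>R v" "\<And>x. quad_form B x \<le> m * (norm x)^2"
proof -
  have "continuous_on (sphere 0 1) (quad_form B)"
    by (intro continuous_intros)
  moreover have "sphere (0::real^'n) 1 \<noteq> {}" by simp
  ultimately obtain v where v: "v \<in> sphere 0 1"
    and max: "\<And>y. y \<in> sphere 0 1 \<Longrightarrow> quad_form B y \<le> quad_form B v"
    using continuous_attains_sup[OF compact_sphere] by blast
  define m where "m = quad_form B v"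
  have bound: "quad_form B x \<le> m * (norm x)^2" for x
  proof (cases "x = 0")
    case False
    have "inverse (norm x) *\<^sub>R x \<in> sphere 0 1" using False by simp
    then have "(inverse (norm x))^2 * quad_form B x \<le> m"
      unfolding m_def quad_form_scaleR[symmetric] by (rule max)
    then have "(norm x)^2 * ((inverse (norm x))^2 * quad_form B x) \<le> (norm x)^2 * m"
      by (simp add: mult_left_mono)
    with False show ?thesis
      by (simp add: field_simps)
  qed simp
  let ?M = "m *\<^sub>R mat 1 - B"
  have "?M *v v = 0"
  proof (rule psd_quad_form_zero_imp_kernel)
    show "symmetric_matrix ?M" by (rule symmetric_matrix_scaled_identity_diff[OF sym])
    show "0 \<le> quad_form ?M y" for y
      using bound[of y] by (simp add: quad_form_scaled_identity_diff)
    show "quad_form ?M v = 0"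
      using v by (simp add: quad_form_scaled_identity_diff m_def)
  qed
  then have "B *v v = m *\<^sub>R v"
    by (simp add: matrix_vector_mult_diff_rdistrib scaleR_matrix_vector_assoc[symmetric])
  moreover have "v \<noteq> 0" using v by auto
  ultimately show thesis using that bound by blast
qed

lemma
  fixes B :: "real^'n^'n"
  assumes "symmetric_matrix B"
  shows quad_form_le_lambda_max: "quad_form B x \<le> lambda_max B * (norm x)^2"
    and lambda_max_eigenvalue: "\<exists>v. v \<noteq> 0 \<and> B *v v = lambda_max B *\<^sub>R v"
proof -
  obtain m v where v: "v \<noteq> 0" "B *v v = m *\<^sub>R v" and bound: "\<And>x. quad_form B x \<le> m * (norm x)^2"
    using symmetric_matrix_max_eigenvalue[OF assms] by blast
  have "l \<le> m" if "u \<noteq> 0" "B *v u = l *\<^sub>R u" for l u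
    using bound[of u] that by (simp add: power2_norm_eq_inner)
  then have "lambda_max B = m"
    unfolding lambda_max_def using v by (intro cSup_eq_maximum) auto
  then show "quad_form B x \<le> lambda_max B * (norm x)^2" "\<exists>v. v \<noteq> 0 \<and> B *v v = lambda_max B *\<^sub>R v"
    using bound v by auto
qed

lemma lambda_max_le_iff:
  assumes "symmetric_matrix B"
  shows "lambda_max B \<le> c \<longleftrightarrow> (\<forall>x. quad_form B x \<le> c * (norm x)^2)"
proof (intro iffI allI)
  fix x
  assume "lambda_max B \<le> c"
  have "quad_form B x \<le> lambda_max B * (norm x)^2"
    by (rule quad_form_le_lambda_max[OF assms])
  also have "\<dots> \<le> c * (norm x)^2"
    using \<open>lambda_max B \<le> c\<close> by (simp add: mult_right_mono)
  finally show "quad_form B x \<le> c * (norm x)^2" .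
next
  assume le: "\<forall>x. quad_form B x \<le> c * (norm x)^2"
  obtain v where v: "v \<noteq> 0" "B *v v = lambda_max B *\<^sub>R v"
    using lambda_max_eigenvalue[OF assms] by blast
  then have "quad_form B v = lambda_max B * (norm v)^2"
    by (simp add: power2_norm_eq_inner)
  then have "lambda_max B * (norm v)^2 \<le> c * (norm v)^2"
    using le[rule_format, of v] by simp
  then show "lambda_max B \<le> c"
    using v(1) by simp
qed

lemma quadratic_roots_opposite_signs:
  fixes P N b :: real
  assumes P: "P > 0" and N: "N < 0"
  obtains a1 a2 where "a2 < 0" "0 < a1" "a1 * a2 = N / P"
    "a1^2 * P + 2 * a1 * b + N = 0" "a2^2 * P + 2 * a2 * b + N = 0"
proof -
  define r where "r = sqrt (b^2 - P * N)"
  have "P * N < 0" using P N by (simp add: mult_pos_neg)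
  then have "0 \<le> b^2 - P * N"
    using zero_le_power2[of b] by linarith
  then have r2: "r^2 = b^2 - P * N"
    unfolding r_def by simp
  have "\<bar>b\<bar> < r"
    unfolding r_def real_sqrt_abs[symmetric] using \<open>P * N < 0\<close> by (simp only: real_sqrt_less_mono)
  define a1 where "a1 = (- b + r) / P"
  define a2 where "a2 = (- b - r) / P"
  have lin: "P * a1 + b = r" "P * a2 + b = - r"
    using P by (simp_all add: a1_def a2_def)
  have root: "a^2 * P + 2 * a * b + N = 0" if "(P * a + b)^2 = r^2" for a
  proof -
    have "P * (a^2 * P + 2 * a * b + N) = 0"
      using that r2 by (simp add: power2_eq_square algebra_simps)
    then show ?thesis using P by simp
  qed
  have "a2 < 0" "0 < a1"
    using \<open>\<bar>b\<bar> < r\<close> P by (simp_all add: a1_def a2_def divide_neg_pos)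
  moreover have "a1 * a2 = N / P"
  proof -
    have "a1 * a2 = ((- b + r) * (- b - r)) / (P * P)"
      by (simp add: a1_def a2_def)
    also have "(- b + r) * (- b - r) = N * P"
      using r2 by (simp add: power2_eq_square algebra_simps)
    finally show ?thesis
      using P by simp
  qed
  moreover have "a1^2 * P + 2 * a1 * b + N = 0" "a2^2 * P + 2 * a2 * b + N = 0"
    by (rule root, simp add: lin)+
  ultimately show thesis by (rule that)
qed

text \<open>The binary case of Finsler's lemma: the combination of the values of the second form
  at the roots a2 < 0 < a1 of the first that cancels the cross term is positive.\<close>
lemma binary_forms_positive_on_roots:
  fixes P N b Q R c :: real
  assumes P: "P > 0" and N: "N < 0"
    and pos: "\<And>a. a^2 * P + 2 * a * b + N = 0 \<Longrightarrow> 0 < a^2 * Q + 2 * a * c + R"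
  shows "N * Q < R * P"
proof -
  obtain a1 a2 where a: "a2 < 0" "0 < a1" "a1 * a2 = N / P"
    and roots: "a1^2 * P + 2 * a1 * b + N = 0" "a2^2 * P + 2 * a2 * b + N = 0"
    using quadratic_roots_opposite_signs[OF P N] by blast
  have "0 < (- a2) * (a1^2 * Q + 2 * a1 * c + R)" "0 < a1 * (a2^2 * Q + 2 * a2 * c + R)"
    using pos[OF roots(1)] pos[OF roots(2)] a by (simp_all add: mult_neg_pos)
  then have "0 < (- a2) * (a1^2 * Q + 2 * a1 * c + R) + a1 * (a2^2 * Q + 2 * a2 * c + R)"
    by linarith
  also have "\<dots> = (a1 - a2) * (R - a1 * a2 * Q)"
    by (simp add: power2_eq_square algebra_simps)
  finally have "0 < R - N / P * Q"
    using a by (simp add: zero_less_mult_iff)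
  then show ?thesis
    using P by (simp add: field_simps)
qed

lemma finsler_quotient_separation:
  assumes symA: "symmetric_matrix A" and symQ: "symmetric_matrix Q"
    and pos: "\<And>z. z \<noteq> 0 \<Longrightarrow> quad_form A z = 0 \<Longrightarrow> 0 < quad_form Q z"
    and x: "quad_form A x > 0" and y: "quad_form A y < 0"
  shows "quad_form A y * quad_form Q x < quad_form Q y * quad_form A x"
proof (rule binary_forms_positive_on_roots[OF x y])
  fix a
  assume root: "a^2 * quad_form A x + 2 * a * (y \<bullet> (A *v x)) + quad_form A y = 0"
  have "a *\<^sub>R x + y \<noteq> 0"
  proof
    assume "a *\<^sub>R x + y = 0"
    then have "y = (- a) *\<^sub>R x" by (simp add: eq_neg_iff_add_eq_0 add.commute)
    then have "quad_form A y = (- a)^2 * quad_form A x" by (simp only: quad_form_scaleR)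
    with x y show False by (smt (verit) zero_le_power2 mult_nonneg_nonneg)
  qed
  moreover have "quad_form A (a *\<^sub>R x + y) = 0"
    using root by (simp only: quad_form_combination[OF symA])
  ultimately have "0 < quad_form Q (a *\<^sub>R x + y)" by (rule pos)
  then show "0 < a^2 * quad_form Q x + 2 * a * (y \<bullet> (Q *v x)) + quad_form Q y"
    by (simp only: quad_form_combination[OF symQ])
qed

lemma finsler:
  assumes symA: "symmetric_matrix A" and symQ: "symmetric_matrix Q"
    and pos: "\<And>z. z \<noteq> 0 \<Longrightarrow> quad_form A z = 0 \<Longrightarrow> 0 < quad_form Q z"
    and indef: "\<exists>x. quad_form A x > 0" "\<exists>y. quad_form A y < 0"
  obtains t where "\<And>x. t * quad_form A x \<le> quad_form Q x"
proof -
  define L where "L = {quad_form Q y / quad_form A y | y. quad_form A y < 0}"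
  have below: "l < quad_form Q x / quad_form A x" if "l \<in> L" "quad_form A x > 0" for l x
  proof -
    obtain y where l: "l = quad_form Q y / quad_form A y" and y: "quad_form A y < 0"
      using \<open>l \<in> L\<close> by (auto simp: L_def)
    have "quad_form A y * quad_form A x < 0"
      using y \<open>quad_form A x > 0\<close> by (simp add: mult_neg_pos)
    moreover have "quad_form A y * quad_form Q x < quad_form Q y * quad_form A x"
      using finsler_quotient_separation[OF symA symQ pos \<open>quad_form A x > 0\<close> y] .
    moreover have "l - quad_form Q x / quad_form A x
        = (quad_form Q y * quad_form A x - quad_form A y * quad_form Q x)
          / (quad_form A y * quad_form A x)"
      using y \<open>quad_form A x > 0\<close> unfolding l by (simp add: field_simps)
    ultimately have "l - quad_form Q x / quad_form A x < 0"
      by (simp add: divide_pos_neg)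
    then show ?thesis by simp
  qed
  have "L \<noteq> {}" using indef(2) by (auto simp: L_def)
  moreover have "bdd_above L"
    using indef(1) below by (meson bdd_aboveI less_imp_le)
  ultimately have "Sup L * quad_form A x \<le> quad_form Q x" for x
  proof -
    consider "quad_form A x > 0" | "quad_form A x < 0" | "quad_form A x = 0" by linarith
    then show ?thesis
    proof cases
      case 1
      then have "Sup L \<le> quad_form Q x / quad_form A x"
        using below \<open>L \<noteq> {}\<close> by (meson cSup_least less_imp_le)
      with 1 show ?thesis by (simp add: le_divide_eq)
    next
      case 2
      then have "quad_form Q x / quad_form A x \<le> Sup L"
        using \<open>bdd_above L\<close> by (auto simp: L_def intro!: cSup_upper)
      with 2 show ?thesis by (simp add: divide_le_eq)
    next
      case 3
      then show ?thesis using pos[of x] by (cases "x = 0") auto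
    qed
  qed
  then show thesis by (rule that)
qed

lemma inner_axis_matrix_axis: "axis j 1 \<bullet> (M *v axis i 1) = M$j$i"
  by (simp add: matrix_vector_mult_basis column_def inner_axis')

lemma zero_diagonal_indefinite:
  assumes sym: "symmetric_matrix A" and diag: "\<And>i. A$i$i = 0" and "A \<noteq> 0"
  shows "\<exists>x. quad_form A x > 0" and "\<exists>y. quad_form A y < 0"
proof -
  obtain i j where "A$j$i \<noteq> 0"
    using \<open>A \<noteq> 0\<close> by (metis vec_eq_iff zero_index)
  have eq: "quad_form A (a *\<^sub>R axis i 1 + axis j 1) = 2 * a * A$j$i" for a
    by (simp add: quad_form_combination[OF sym] inner_axis_matrix_axis diag)
  have "0 < quad_form A (A$j$i *\<^sub>R axis i 1 + axis j 1)"
    and "quad_form A ((- A$j$i) *\<^sub>R axis i 1 + axis j 1) < 0"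
    unfolding eq using \<open>A$j$i \<noteq> 0\<close> by (auto simp: zero_less_mult_iff mult_less_0_iff)
  then show "\<exists>x. quad_form A x > 0" and "\<exists>y. quad_form A y < 0"
    by blast+
qed

definition ones_matrix :: "real^'n^'n" where
  "ones_matrix = (\<chi> i j. 1)"

lemma symmetric_ones_matrix: "symmetric_matrix ones_matrix"
  by (simp add: symmetric_matrix_iff ones_matrix_def)

lemma quad_form_ones_matrix: "quad_form ones_matrix x = (ones \<bullet> x)^2"
proof -
  have "ones_matrix *v x = (ones \<bullet> x) *\<^sub>R ones"
    by (simp add: ones_matrix_def ones_def matrix_vector_mult_def inner_vec_def vec_eq_iff)
  then show ?thesis by (simp add: power2_eq_square inner_commute)
qed

definition theta_feasible :: "('n::finite \<Rightarrow> 'n \<Rightarrow> bool) \<Rightarrow> real^'n^'n \<Rightarrow> bool" where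
  "theta_feasible E B \<longleftrightarrow> symmetric_matrix B \<and> (\<forall>i j. (i = j \<or> \<not> E i j) \<longrightarrow> B$i$j = 1)"

lemma lovasz_theta_eq_Inf: "lovasz_theta E = Inf (lambda_max ` {B. theta_feasible E B})"
  unfolding lovasz_theta_def theta_feasible_def by (rule arg_cong[where f = Inf]) blast

lemma theta_feasible_iff_weighted_adj:
  "theta_feasible E B \<longleftrightarrow> weighted_adj E (B - ones_matrix)"
  unfolding theta_feasible_def weighted_adj_def symmetric_matrix_iff
  by (auto simp: ones_matrix_def) metis

lemma weighted_adj_scaleR: "weighted_adj E A \<Longrightarrow> weighted_adj E (c *\<^sub>R A)"
  by (simp add: weighted_adj_def symmetric_matrix_iff)

lemma one_le_lambda_max:
  assumes "symmetric_matrix B" "\<And>i. B$i$i = 1"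
  shows "1 \<le> lambda_max B"
  using quad_form_le_lambda_max[OF assms(1), of "axis undefined 1"]
  by (simp add: inner_axis_matrix_axis assms(2))

definition spherical_sup :: "real^'n^'n \<Rightarrow> real" where
  "spherical_sup A = Sup {(norm v)^2 | v. v \<in> sphere_S \<and> quad_form A v = 0}"

lemma spherical_alpha_eq_Inf: "spherical_alpha E = Inf (spherical_sup ` {A. weighted_adj E A})"
  unfolding spherical_alpha_def spherical_sup_def by (rule arg_cong[where f = Inf]) blast

lemma norm_le_norm_ones_if_sphere_S:
  fixes v :: "real^'n"
  assumes "v \<in> sphere_S"
  shows "norm v \<le> norm (ones :: real^'n)"
proof (cases "v = 0")
  case False
  have "norm v * norm v = ones \<bullet> v"
    using assms by (simp add: sphere_S_def power2_eq_square)
  also have "\<dots> \<le> norm (ones :: real^'n) * norm v"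
    by (rule norm_cauchy_schwarz)
  finally show ?thesis using False by simp
qed simp

lemma
  fixes A :: "real^'n^'n"
  shows spherical_sup_upper: "v \<in> sphere_S \<Longrightarrow> quad_form A v = 0 \<Longrightarrow> (norm v)^2 \<le> spherical_sup A"
    and spherical_sup_least:
      "(\<And>v. v \<in> sphere_S \<Longrightarrow> quad_form A v = 0 \<Longrightarrow> (norm v)^2 \<le> c) \<Longrightarrow> spherical_sup A \<le> c"
proof -
  let ?V = "{(norm v)^2 | v. v \<in> sphere_S \<and> quad_form A v = 0}"
  have "bdd_above ?V"
    using norm_le_norm_ones_if_sphere_S
    by (intro bdd_aboveI[of _ "(norm (ones :: real^'n))^2"]) (auto intro: power_mono)
  then show "v \<in> sphere_S \<Longrightarrow> quad_form A v = 0 \<Longrightarrow> (norm v)^2 \<le> spherical_sup A"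
    unfolding spherical_sup_def by (blast intro: cSup_upper)
  have "(0::real^'n) \<in> sphere_S" by (simp add: sphere_S_def)
  then have "?V \<noteq> {}" by force
  then show "(\<And>v. v \<in> sphere_S \<Longrightarrow> quad_form A v = 0 \<Longrightarrow> (norm v)^2 \<le> c) \<Longrightarrow> spherical_sup A \<le> c"
    unfolding spherical_sup_def by (blast intro: cSup_least)
qed

lemma spherical_sup_nonneg: "0 \<le> spherical_sup A"
  using spherical_sup_upper[of 0 A] by (simp add: sphere_S_def)

lemma spherical_sup_le_lambda_max:
  fixes B :: "real^'n^'n"
  assumes sym: "symmetric_matrix B" and diag: "\<And>i. B$i$i = 1"
  shows "spherical_sup (B - ones_matrix) \<le> lambda_max B"
proof (rule spherical_sup_least)
  fix v :: "real^'n"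
  assume "v \<in> sphere_S" and "quad_form (B - ones_matrix) v = 0"
  then have "((norm v)^2)^2 = quad_form B v"
    by (simp add: sphere_S_def quad_form_ones_matrix matrix_vector_mult_diff_rdistrib inner_diff_right)
  also have "\<dots> \<le> lambda_max B * (norm v)^2"
    by (rule quad_form_le_lambda_max[OF sym])
  finally have le: "(norm v)^2 * (norm v)^2 \<le> lambda_max B * (norm v)^2"
    by (simp add: power2_eq_square)
  show "(norm v)^2 \<le> lambda_max B"
  proof (cases "v = 0")
    case True
    then show ?thesis using one_le_lambda_max[OF sym diag] by simp
  next
    case False
    show ?thesis by (rule mult_right_le_imp_le[OF le]) (simp add: False)
  qed
qed

text \<open>A nonzero isotropic vector of A, rescaled, lies on sphere_S.\<close>
lemma inner_ones_sq_le_spherical_sup: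
  assumes "quad_form A u = 0"
  shows "(ones \<bullet> u)^2 \<le> spherical_sup A * (norm u)^2"
proof (cases "u = 0")
  case False
  define v where "v = ((ones \<bullet> u) / (norm u)^2) *\<^sub>R u"
  have "ones \<bullet> v = (ones \<bullet> u)^2 / (norm u)^2" and norm_v: "(norm v)^2 = (ones \<bullet> u)^2 / (norm u)^2"
    using False by (simp_all add: v_def power2_eq_square field_simps)
  then have "v \<in> sphere_S" by (simp add: sphere_S_def)
  moreover have "quad_form A v = 0"
    unfolding v_def quad_form_scaleR assms by simp
  ultimately have "(ones \<bullet> u)^2 / (norm u)^2 \<le> spherical_sup A"
    using spherical_sup_upper norm_v by metis
  then show ?thesis using False by (simp add: divide_le_eq)
qed simp

lemma lambda_max_ones_matrix_plus_le:
  fixes A :: "real^'n^'n"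
  assumes sym: "symmetric_matrix A" and diag: "\<And>i. A$i$i = 0" and "spherical_sup A < s"
  obtains t where "lambda_max (ones_matrix + t *\<^sub>R A) \<le> s"
proof -
  let ?Q = "s *\<^sub>R mat 1 - ones_matrix :: real^'n^'n"
  have quadQ: "quad_form ?Q x = s * (norm x)^2 - (ones \<bullet> x)^2" for x
    by (simp add: quad_form_scaled_identity_diff quad_form_ones_matrix)
  have pos: "0 < quad_form ?Q z" if "z \<noteq> 0" "quad_form A z = 0" for z
  proof -
    have "spherical_sup A * (norm z)^2 < s * (norm z)^2"
      using \<open>spherical_sup A < s\<close> that(1) by simp
    then show ?thesis
      using inner_ones_sq_le_spherical_sup[OF that(2)] by (simp add: quadQ)
  qed
  obtain t where t: "\<And>x. t * quad_form A x \<le> quad_form ?Q x"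
  proof (cases "A = 0")
    case True
    have "0 * quad_form A x \<le> quad_form ?Q x" for x
      using pos[of x] True by (cases "x = 0") auto
    then show thesis by (rule that)
  next
    case False
    show thesis
      using finsler[OF sym symmetric_matrix_scaled_identity_diff[OF symmetric_ones_matrix] pos
          zero_diagonal_indefinite[OF sym diag False]] that by blast
  qed
  have "quad_form (ones_matrix + t *\<^sub>R A) x \<le> s * (norm x)^2" for x
    using t[of x]
    by (simp add: quadQ quad_form_ones_matrix matrix_vector_mult_add_rdistrib
        scaleR_matrix_vector_assoc[symmetric] inner_add_right)
  moreover have "symmetric_matrix (ones_matrix + t *\<^sub>R A)"
    using sym by (simp add: symmetric_matrix_iff ones_matrix_def)
  ultimately show thesis
    using that lambda_max_le_iff by blast
qed

lemma bdd_below_theta_values: "bdd_below (lambda_max ` {B. theta_feasible E B})"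
  by (rule bdd_belowI2[of _ 1]) (auto simp: theta_feasible_def intro: one_le_lambda_max)

lemma lovasz_theta_le_spherical_sup:
  assumes "weighted_adj E A"
  shows "lovasz_theta E \<le> spherical_sup A"
proof (rule dense_ge)
  fix s
  assume "spherical_sup A < s"
  moreover have "symmetric_matrix A" "\<And>i. A$i$i = 0"
    using assms by (auto simp: weighted_adj_def)
  ultimately obtain t where t: "lambda_max (ones_matrix + t *\<^sub>R A) \<le> s"
    using lambda_max_ones_matrix_plus_le by blast
  have "theta_feasible E (ones_matrix + t *\<^sub>R A)"
    using weighted_adj_scaleR[OF assms] by (simp add: theta_feasible_iff_weighted_adj)
  then have "lovasz_theta E \<le> lambda_max (ones_matrix + t *\<^sub>R A)"
    unfolding lovasz_theta_eq_Inf by (intro cInf_lower bdd_below_theta_values) simp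
  with t show "lovasz_theta E \<le> s" by linarith
qed

lemma spherical_alpha_le_lambda_max:
  assumes "theta_feasible E B"
  shows "spherical_alpha E \<le> lambda_max B"
proof -
  have "bdd_below (spherical_sup ` {A. weighted_adj E A})"
    by (rule bdd_belowI2[of _ 0]) (rule spherical_sup_nonneg)
  moreover have "weighted_adj E (B - ones_matrix)"
    using assms by (simp add: theta_feasible_iff_weighted_adj)
  ultimately have "spherical_alpha E \<le> spherical_sup (B - ones_matrix)"
    unfolding spherical_alpha_eq_Inf by (blast intro: cInf_lower)
  also have "\<dots> \<le> lambda_max B"
    using assms by (intro spherical_sup_le_lambda_max) (auto simp: theta_feasible_def)
  finally show ?thesis .
qed

theorem lemma1:
  fixes E :: "'n::finite \<Rightarrow> 'n \<Rightarrow> bool"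
  assumes "simple_graph E"
  shows "lovasz_theta E = spherical_alpha E"
proof (rule antisym)
  have "weighted_adj E 0"
    by (simp add: weighted_adj_def symmetric_matrix_iff)
  then show "lovasz_theta E \<le> spherical_alpha E"
    unfolding spherical_alpha_eq_Inf
    by (blast intro: cInf_greatest lovasz_theta_le_spherical_sup)
  have "theta_feasible E ones_matrix"
    using symmetric_ones_matrix by (simp add: theta_feasible_def ones_matrix_def)
  then show "spherical_alpha E \<le> lovasz_theta E"
    unfolding lovasz_theta_eq_Inf
    by (blast intro: cInf_greatest spherical_alpha_le_lambda_max)
qed

end
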